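(* Let $P$ be an $n\times n$ D-orthogonal matrix. Then there exist vectors $\mathbf u_1,\dots,\mathbf u_n\in\{0,1\}^n$ such that each matrix $I+\mathbf u_i\mathbf u_i^T$ is D-orthogonal, and a matrix obtained from $P$ by permuting its rows and columns is congruent modulo $2$ to the product $(I+\mathbf u_1\mathbf u_1^T)(I+\mathbf u_2\mathbf u_2^T)\cdots(I+\mathbf u_n\mathbf u_n^T)$.
   Context: For integer matrices, $A\cong B$ means $A\equiv B\pmod 2$ entrywise. An integer (dyadic) square matrix $P$ is D-orthogonal if $P^TP\cong I$. Two matrices are indistinguishable if one is obtained from the other by permuting rows and columns. *)

theory Defs
  imports "HOL-Combinatorics.Permutations"
begin

text \<open>n x n integer matrices are represented as functions nat => nat => int,
  only entries with indices < n are meaningful.\<close>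

type_synonym imat = "nat \<Rightarrow> nat \<Rightarrow> int"
type_synonym ivec = "nat \<Rightarrow> int"

definition mat_mult :: "nat \<Rightarrow> imat \<Rightarrow> imat \<Rightarrow> imat" where
  "mat_mult n A B = (\<lambda>i j. \<Sum>k<n. A i k * B k j)"

definition mat_transpose :: "imat \<Rightarrow> imat" where
  "mat_transpose A = (\<lambda>i j. A j i)"

definition mat_id :: imat where
  "mat_id = (\<lambda>i j. if i = j then 1 else 0)"

definition mat_add :: "imat \<Rightarrow> imat \<Rightarrow> imat" where
  "mat_add A B = (\<lambda>i j. A i j + B i j)"

definition outer :: "ivec \<Rightarrow> imat" where
  "outer u = (\<lambda>i j. u i * u j)"

definition cong2 :: "nat \<Rightarrow> imat \<Rightarrow> imat \<Rightarrow> bool" where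
  "cong2 n A B \<longleftrightarrow> (\<forall>i<n. \<forall>j<n. A i j mod 2 = B i j mod 2)"

definition D_orthogonal :: "nat \<Rightarrow> imat \<Rightarrow> bool" where
  "D_orthogonal n P \<longleftrightarrow> cong2 n (mat_mult n (mat_transpose P) P) mat_id"

definition mat_prod_list :: "nat \<Rightarrow> imat list \<Rightarrow> imat" where
  "mat_prod_list n As = foldr (mat_mult n) As mat_id"

definition permute_rc :: "(nat \<Rightarrow> nat) \<Rightarrow> (nat \<Rightarrow> nat) \<Rightarrow> imat \<Rightarrow> imat" where
  "permute_rc \<sigma> \<tau> A = (\<lambda>i j. A (\<sigma> i) (\<tau> j))"

end

theory Submission
  imports Defs "HOL-Library.Z2"
begin

text \<open>Modulo 2 a D-orthogonal matrix is an orthogonal matrix over GF(2). Induct on the size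
  \<open>m\<close> of the leading block outside which it is the identity. After a row swap inside the
  block making the diagonal entry of column \<open>m\<close> zero, the matrix \<open>I + u u\<^sup>T\<close> with
  \<open>u = P e\<^sub>m + e\<^sub>m\<close> is an orthogonal involution (\<open>u\<close> has even weight) mapping column
  \<open>m\<close> to \<open>e\<^sub>m\<close>; orthogonality then forces row \<open>m\<close> to be \<open>e\<^sub>m\<^sup>T\<close> as well. The row
  permutations accumulated later are pushed past \<open>I + u u\<^sup>T\<close> by permuting \<open>u\<close>.\<close>

\<comment> \<open>otherwise \<open>+\<close> and \<open>*\<close> on bit are rewritten to xor/and, which defeats ring reasoning\<close>
declare add_bit_eq_xor [simp del] mult_bit_eq_and [simp del]

type_synonym 'a sqmat = "nat \<Rightarrow> nat \<Rightarrow> 'a"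

definition mmult :: "nat \<Rightarrow> 'a::semiring_0 sqmat \<Rightarrow> 'a sqmat \<Rightarrow> 'a sqmat" where
  "mmult n A B = (\<lambda>i j. \<Sum>k<n. A i k * B k j)"

definition mone :: "'a::zero_neq_one sqmat" where
  "mone = (\<lambda>i j. if i = j then 1 else 0)"

definition mtransp :: "'a sqmat \<Rightarrow> 'a sqmat" where
  "mtransp A = (\<lambda>i j. A j i)"

definition meq :: "nat \<Rightarrow> 'a sqmat \<Rightarrow> 'a sqmat \<Rightarrow> bool" where
  "meq n A B \<longleftrightarrow> (\<forall>i<n. \<forall>j<n. A i j = B i j)"

definition mprod :: "nat \<Rightarrow> 'a::semiring_1 sqmat list \<Rightarrow> 'a sqmat" where
  "mprod n As = foldr (mmult n) As mone"

definition orthogonal :: "nat \<Rightarrow> 'a::comm_semiring_1 sqmat \<Rightarrow> bool" where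
  "orthogonal n P \<longleftrightarrow> meq n (mmult n (mtransp P) P) mone"

definition dot :: "nat \<Rightarrow> (nat \<Rightarrow> 'a::comm_semiring_1) \<Rightarrow> (nat \<Rightarrow> 'a) \<Rightarrow> 'a" where
  "dot n u v = (\<Sum>i<n. u i * v i)"

definition transv :: "(nat \<Rightarrow> 'a::comm_semiring_1) \<Rightarrow> 'a sqmat" where
  "transv u = (\<lambda>i j. mone i j + u i * u j)"

definition id_outside :: "nat \<Rightarrow> nat \<Rightarrow> 'a::zero_neq_one sqmat \<Rightarrow> bool" where
  "id_outside n m P \<longleftrightarrow> (\<forall>i<n. \<forall>j<n. (m \<le> i \<or> m \<le> j) \<longrightarrow> P i j = mone i j)"

definition of_int_mat :: "imat \<Rightarrow> 'a::ring_1 sqmat" where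
  "of_int_mat A = (\<lambda>i j. of_int (A i j))"

lemma sum_mone_left:
  "i < n \<Longrightarrow> (\<Sum>l<n. mone i l * f l) = (f i :: 'a::semiring_1)"
  by (subst sum.cong[OF refl, of _ _ "\<lambda>l. if i = l then f l else 0"]) (auto simp: mone_def)

lemma sum_mone_right:
  "j < n \<Longrightarrow> (\<Sum>l<n. f l * mone l j) = (f j :: 'a::semiring_1)"
  by (subst sum.cong[OF refl, of _ _ "\<lambda>l. if l = j then f l else 0"]) (auto simp: mone_def)

lemma mmult_mone_left: "i < n \<Longrightarrow> mmult n mone A i j = (A i j :: 'a::semiring_1)"
  by (simp add: mmult_def sum_mone_left)

lemma mmult_assoc: "mmult n (mmult n A B) C = mmult n A (mmult n B C)"
  by (auto simp: mmult_def fun_eq_iff sum_distrib_left sum_distrib_right mult.assoc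
      intro: sum.swap)

lemma mtransp_mmult:
  "mtransp (mmult n A B) = mmult n (mtransp B) (mtransp (A :: 'a::comm_semiring_0 sqmat))"
  by (simp add: mtransp_def mmult_def fun_eq_iff mult.commute)

lemma meq_mmult: "meq n A A' \<Longrightarrow> meq n B B' \<Longrightarrow> meq n (mmult n A B) (mmult n A' B')"
  by (simp add: meq_def mmult_def)

lemma meq_trans: "meq n A B \<Longrightarrow> meq n B C \<Longrightarrow> meq n A C"
  by (simp add: meq_def)

lemma meq_refl: "meq n A A"
  by (simp add: meq_def)

lemma orthogonalD:
  "orthogonal n P \<Longrightarrow> i < n \<Longrightarrow> j < n \<Longrightarrow> (\<Sum>l<n. P l i * P l j) = mone i j"
  by (simp add: orthogonal_def meq_def mmult_def mtransp_def)

lemma orthogonal_permute_rows: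
  assumes "orthogonal n P" "\<rho> permutes {..<n}"
  shows "orthogonal n (\<lambda>i j. P (\<rho> i) j)"
proof -
  have "(\<Sum>l<n. P (\<rho> l) i * P (\<rho> l) j) = (\<Sum>l<n. P l i * P l j)" for i j
    using sum.permute[OF assms(2), of "\<lambda>l. P l i * P l j"] by (simp add: comp_def)
  then show ?thesis
    using orthogonalD[OF assms(1)]
    by (simp add: orthogonal_def meq_def mmult_def mtransp_def)
qed

lemma dot_commute: "dot n u v = dot n v u"
  by (simp add: dot_def mult.commute)

lemma dot_permute:
  "\<sigma> permutes {..<n} \<Longrightarrow> dot n (\<lambda>i. u (\<sigma> i)) (\<lambda>i. u (\<sigma> i)) = dot n u u"
  using sum.permute[of \<sigma> "{..<n}" "\<lambda>i. u i * u i"] by (simp add: dot_def comp_def)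

subsection \<open>Transvections\<close>

lemma mtransp_transv: "mtransp (transv u) = transv u"
  by (simp add: mtransp_def transv_def mone_def fun_eq_iff mult.commute)

lemma mmult_transv_left:
  "i < n \<Longrightarrow> mmult n (transv u) A i j = A i j + u i * dot n u (\<lambda>l. A l j)"
  by (simp add: mmult_def transv_def dot_def distrib_right sum.distrib sum_distrib_left
      sum_mone_left mult.assoc)

lemma mmult_transv_permute:
  assumes "\<sigma> permutes {..<n}"
  shows "mmult n (transv u) Q (\<sigma> i) j
           = mmult n (transv (\<lambda>l. u (\<sigma> l))) (\<lambda>l j. Q (\<sigma> l) j) i j"
proof -
  have "mmult n (transv u) Q (\<sigma> i) j = (\<Sum>l<n. transv u (\<sigma> i) (\<sigma> l) * Q (\<sigma> l) j)"
    using sum.permute[OF assms, of "\<lambda>l. transv u (\<sigma> i) l * Q l j"]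
    by (simp add: mmult_def comp_def)
  also have "\<dots> = mmult n (transv (\<lambda>l. u (\<sigma> l))) (\<lambda>l j. Q (\<sigma> l) j) i j"
    using permutes_inj[OF assms] by (simp add: mmult_def transv_def mone_def inj_eq)
  finally show ?thesis .
qed

lemma id_outside_mmult_transv:
  assumes "id_outside n m P" "\<forall>i<n. m \<le> i \<longrightarrow> u i = 0"
  shows "id_outside n m (mmult n (transv u) P)"
  unfolding id_outside_def
proof (intro allI impI)
  fix i j assume ij: "i < n" "j < n" "m \<le> i \<or> m \<le> j"
  have "u i * dot n u (\<lambda>l. P l j) = 0"
  proof (cases "m \<le> i")
    case False
    then have "dot n u (\<lambda>l. P l j) = (\<Sum>l<n. u l * mone l j)"
      using assms(1) ij by (auto simp: dot_def id_outside_def intro!: sum.cong)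
    also have "\<dots> = 0"
      using assms(2) ij False by (simp add: sum_mone_right)
    finally show ?thesis by simp
  qed (use assms(2) ij in simp)
  moreover have "P i j = mone i j"
    using assms(1) ij unfolding id_outside_def by blast
  ultimately show "mmult n (transv u) P i j = mone i j"
    using ij by (simp add: mmult_transv_left)
qed

lemma bit_cases: "(x::bit) = 0 \<or> x = 1"
  by (cases x) simp_all

lemma dot_transv_column:
  "j < n \<Longrightarrow> dot n u (\<lambda>l. transv u l j) = u j + dot n u u * (u j :: bit)"
  by (simp add: dot_def transv_def distrib_left sum.distrib mult.assoc sum_distrib_right
      sum_mone_right)

lemma transv_square:
  "dot n u u = (0::bit) \<Longrightarrow> meq n (mmult n (transv u) (transv u)) mone"
  by (simp add: meq_def mmult_transv_left dot_transv_column) (simp add: transv_def add.assoc)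

lemma orthogonal_transv: "dot n u u = (0::bit) \<Longrightarrow> orthogonal n (transv u)"
  by (simp add: orthogonal_def mtransp_transv transv_square)

lemma transv_cancel:
  assumes "dot n u u = (0::bit)"
  shows "meq n (mmult n (transv u) (mmult n (transv u) B)) B"
proof -
  have "meq n (mmult n (mmult n (transv u) (transv u)) B) (mmult n mone B)"
    using assms by (intro meq_mmult transv_square meq_refl)
  moreover have "meq n (mmult n mone B) B"
    by (simp add: meq_def mmult_mone_left)
  ultimately show ?thesis
    by (metis mmult_assoc meq_trans)
qed

lemma orthogonal_mmult_transv:
  assumes "dot n u u = (0::bit)" "orthogonal n P"
  shows "orthogonal n (mmult n (transv u) P)"
proof -
  have "mmult n (mtransp (mmult n (transv u) P)) (mmult n (transv u) P)
          = mmult n (mtransp P) (mmult n (transv u) (mmult n (transv u) P))"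
    by (simp add: mtransp_mmult mtransp_transv mmult_assoc)
  moreover have "meq n (mmult n (mtransp P) (mmult n (transv u) (mmult n (transv u) P)))
                       (mmult n (mtransp P) P)"
    using assms(1) by (intro meq_mmult meq_refl transv_cancel)
  ultimately show ?thesis
    using assms(2) unfolding orthogonal_def by (metis meq_trans)
qed

text \<open>Column \<open>m\<close> has odd weight, so \<open>u\<close> has even weight and \<open>u \<bullet> (P e\<^sub>m) = 1\<close>.\<close>

lemma transv_clears_column:
  fixes P :: "bit sqmat"
  assumes orth: "orthogonal n P" and m: "m < n" and diag: "P m m = 0"
  defines "u \<equiv> \<lambda>l. P l m + mone l m"
  shows "dot n u u = 0" and "\<forall>i<n. mmult n (transv u) P i m = mone i m"
proof -
  have "dot n (\<lambda>l. P l m) (\<lambda>l. P l m) = 1"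
    using orthogonalD[OF orth m m] by (simp add: dot_def mone_def)
  then have dot_col: "dot n u (\<lambda>l. P l m) = 1"
    using diag m
    by (subst dot_commute) (simp add: dot_def u_def distrib_left sum.distrib sum_mone_right)
  have "dot n u u = dot n u (\<lambda>l. P l m) + u m"
    using m by (simp add: dot_def u_def distrib_left sum.distrib sum_mone_right)
  then show "dot n u u = 0"
    using dot_col diag by (simp add: u_def mone_def)
  show "\<forall>i<n. mmult n (transv u) P i m = mone i m"
    using dot_col by (simp add: mmult_transv_left u_def add.assoc[symmetric])
qed

subsection \<open>Reduction of an orthogonal matrix to a smaller block\<close>

lemma id_outside_shrink:
  fixes Q :: "bit sqmat"
  assumes orth: "orthogonal n Q" and blk: "id_outside n (Suc m) Q"
    and col: "\<forall>i<n. Q i m = mone i m" and m: "m < n"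
  shows "id_outside n m Q"
  unfolding id_outside_def
proof (intro allI impI)
  fix i j assume ij: "i < n" "j < n" "m \<le> i \<or> m \<le> j"
  show "Q i j = mone i j"
  proof (cases "Suc m \<le> i \<or> Suc m \<le> j \<or> j = m")
    case True
    then show ?thesis using blk col ij by (auto simp: id_outside_def)
  next
    case False
    then have i: "i = m" and jm: "j \<noteq> m" using ij by auto
    have "Q m j = (\<Sum>l<n. Q l j * mone l m)"
      using m by (simp add: sum_mone_right)
    also have "\<dots> = mone j m"
      using orthogonalD[OF orth ij(2) m] col by simp
    finally show ?thesis using i jm by (simp add: mone_def)
  qed
qed

text \<open>A column \<open>m\<close> with all entries \<open>0..m\<close> equal to \<open>1\<close> would have inner product
  \<open>1\<close> with column \<open>0\<close>.\<close>

lemma id_outside_column_has_zero: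
  fixes P :: "bit sqmat"
  assumes orth: "orthogonal n P" and blk: "id_outside n (Suc m) P" and m: "m < n"
    and ncol: "\<not> (\<forall>i<n. P i m = mone i m)"
  shows "\<exists>k\<le>m. P k m = 0"
proof (rule ccontr)
  assume "\<not> ?thesis"
  then have col: "P i m = (if i \<le> m then 1 else 0)" if "i < n" for i
    using bit_cases blk that by (auto simp: id_outside_def mone_def)
  have m0: "m \<noteq> 0"
    using ncol col by (auto simp: mone_def split: if_split_asm)
  have "P l 0 * P l m = P l 0 * P l 0" if "l < n" for l
  proof (cases "l \<le> m")
    case False
    then have "P l 0 = 0" using blk that m by (auto simp: id_outside_def mone_def)
    then show ?thesis by simp
  qed (use col that bit_cases[of "P l 0"] in auto)
  then have "(\<Sum>l<n. P l 0 * P l m) = (\<Sum>l<n. P l 0 * P l 0)"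
    by (intro sum.cong) auto
  then show False
    using orthogonalD[OF orth, of 0 m] orthogonalD[OF orth, of 0 0] m m0
    by (simp add: mone_def)
qed

lemma id_outside_permute_rows:
  assumes "id_outside n (Suc m) P" "\<rho> permutes {..<Suc m}" "m < n"
  shows "id_outside n (Suc m) (\<lambda>i j. P (\<rho> i) j)"
  unfolding id_outside_def
proof (intro allI impI)
  fix i j assume ij: "i < n" "j < n" "Suc m \<le> i \<or> Suc m \<le> j"
  show "P (\<rho> i) j = mone i j"
  proof (cases "Suc m \<le> i")
    case True
    then have "\<rho> i = i"
      using permutes_not_in[OF assms(2)] by simp
    with True ij assms(1) show ?thesis
      by (simp add: id_outside_def)
  next
    case False
    then have "\<rho> i < Suc m" "Suc m \<le> j"
      using permutes_in_image[OF assms(2)] ij by auto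
    moreover from this have "P (\<rho> i) j = mone (\<rho> i) j"
      using assms(1,3) ij unfolding id_outside_def by simp
    ultimately show ?thesis
      using False by (simp add: mone_def)
  qed
qed

lemma orthogonal_split_transv:
  fixes P :: "bit sqmat"
  assumes orth: "orthogonal n P" and blk: "id_outside n (Suc m) P" and m: "m < n"
  shows "\<exists>\<rho> u Q. \<rho> permutes {..<Suc m} \<and> dot n u u = 0 \<and> orthogonal n Q
     \<and> id_outside n m Q \<and> meq n (\<lambda>i j. P (\<rho> i) j) (mmult n (transv u) Q)"
proof (cases "\<forall>i<n. P i m = mone i m")
  case True
  have "transv (\<lambda>_. 0) = (mone :: bit sqmat)"
    by (simp add: transv_def)
  then have fac: "meq n P (mmult n (transv (\<lambda>_. 0)) P)"
    by (simp add: meq_def mmult_mone_left)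
  show ?thesis
    by (intro exI[of _ id] exI[of _ "\<lambda>_. 0"] exI[of _ P] conjI)
       (simp_all add: dot_def orth fac id_outside_shrink[OF orth blk True m])
next
  case False
  obtain k where k: "k \<le> m" "P k m = 0"
    using id_outside_column_has_zero[OF orth blk m False] by blast
  define \<rho> where "\<rho> = transpose k m"
  have \<rho>: "\<rho> permutes {..<Suc m}"
    unfolding \<rho>_def using k by (intro permutes_swap_id) auto
  define P' where "P' = (\<lambda>i j. P (\<rho> i) j)"
  have orth': "orthogonal n P'"
    unfolding P'_def using permutes_subset[OF \<rho>] m
    by (intro orthogonal_permute_rows[OF orth]) auto
  have blk': "id_outside n (Suc m) P'"
    unfolding P'_def using id_outside_permute_rows[OF blk \<rho> m] .
  have diag: "P' m m = 0"
    using k by (simp add: P'_def \<rho>_def)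
  define u where "u = (\<lambda>l. P' l m + mone l m)"
  note clear = transv_clears_column[OF orth' m diag, folded u_def]
  define Q where "Q = mmult n (transv u) P'"
  have "\<forall>i<n. Suc m \<le> i \<longrightarrow> u i = 0"
    using blk' m by (auto simp: id_outside_def u_def mone_def)
  then have "id_outside n (Suc m) Q"
    unfolding Q_def using id_outside_mmult_transv[OF blk'] by blast
  moreover have orthQ: "orthogonal n Q"
    unfolding Q_def using orthogonal_mmult_transv[OF clear(1) orth'] .
  ultimately have "id_outside n m Q"
    using id_outside_shrink clear(2) m unfolding Q_def by blast
  moreover have "meq n P' (mmult n (transv u) Q)"
    using transv_cancel[OF clear(1), of P'] unfolding Q_def by (simp add: meq_def)
  ultimately show ?thesis
    using \<rho> clear(1) orthQ unfolding P'_def by blast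
qed

lemma orthogonal_block_factorization:
  fixes P :: "bit sqmat"
  assumes "m \<le> n" "orthogonal n P" "id_outside n m P"
  shows "\<exists>w \<sigma> \<tau>. (\<forall>k<m. dot n (w k) (w k) = 0) \<and> \<sigma> permutes {..<m} \<and> \<tau> permutes {..<m}
     \<and> meq n (\<lambda>i j. P (\<sigma> i) (\<tau> j)) (mprod n (map (\<lambda>k. transv (w k)) [0..<m]))"
  using assms
proof (induction m arbitrary: P)
  case 0
  then show ?case
    by (intro exI[of _ "\<lambda>_ _. 0"] exI[of _ id]) (auto simp: id_outside_def meq_def mprod_def)
next
  case (Suc m)
  from Suc.prems(1) have m: "m < n" by simp
  obtain \<rho> u Q where R: "\<rho> permutes {..<Suc m}" "dot n u u = 0" "orthogonal n Q"
      "id_outside n m Q" "meq n (\<lambda>i j. P (\<rho> i) j) (mmult n (transv u) Q)"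
    using orthogonal_split_transv[OF Suc.prems(2,3) m] by blast
  obtain w \<sigma> \<tau> where W: "\<forall>k<m. dot n (w k) (w k) = 0" "\<sigma> permutes {..<m}" "\<tau> permutes {..<m}"
      "meq n (\<lambda>i j. Q (\<sigma> i) (\<tau> j)) (mprod n (map (\<lambda>k. transv (w k)) [0..<m]))"
    using Suc.IH[OF _ R(3,4)] m by auto
  have "{..<m} \<subseteq> {..<n}" "{..<m} \<subseteq> {..<Suc m}"
    using m by auto
  note \<sigma> = permutes_subset[OF W(2) this(1)] and \<tau> = permutes_subset[OF W(3) this(1)]
  define w' where "w' = case_nat (\<lambda>i. u (\<sigma> i)) w"
  have "\<forall>k<Suc m. dot n (w' k) (w' k) = 0"
    using W(1) R(2) dot_permute[OF \<sigma>, of u] by (auto simp: w'_def less_Suc_eq_0_disj)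
  moreover have "(\<rho> \<circ> \<sigma>) permutes {..<Suc m}" "\<tau> permutes {..<Suc m}"
    using permutes_compose[OF permutes_subset[OF W(2)] R(1)] permutes_subset[OF W(3)] by auto
  moreover have "meq n (\<lambda>i j. P ((\<rho> \<circ> \<sigma>) i) (\<tau> j)) (mprod n (map (\<lambda>k. transv (w' k)) [0..<Suc m]))"
    unfolding meq_def
  proof (intro allI impI)
    fix i j assume ij: "i < n" "j < n"
    have "P ((\<rho> \<circ> \<sigma>) i) (\<tau> j) = mmult n (transv u) Q (\<sigma> i) (\<tau> j)"
      using R(5) ij permutes_in_image[OF \<sigma>] permutes_in_image[OF \<tau>] by (simp add: meq_def)
    also have "\<dots> = mmult n (transv (w' 0)) (\<lambda>l j. Q (\<sigma> l) (\<tau> j)) i j"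
      unfolding mmult_transv_permute[OF \<sigma>] by (simp add: w'_def mmult_def)
    also have "\<dots> = mmult n (transv (w' 0)) (mprod n (map (\<lambda>k. transv (w k)) [0..<m])) i j"
      using W(4) ij by (simp add: mmult_def meq_def)
    also have "\<dots> = mprod n (map (\<lambda>k. transv (w' k)) [0..<Suc m]) i j"
      by (simp add: mprod_def map_upt_Suc w'_def del: upt_Suc)
    finally show "P ((\<rho> \<circ> \<sigma>) i) (\<tau> j) = mprod n (map (\<lambda>k. transv (w' k)) [0..<Suc m]) i j" .
  qed
  ultimately show ?case
    by (intro exI[of _ w'] exI[of _ "\<rho> \<circ> \<sigma>"] exI[of _ \<tau>] conjI)
qed

subsection \<open>Reduction modulo 2\<close>

lemma of_int_bit_mod: "(of_int x :: bit) = of_int (x mod 2)"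
proof -
  have "x = x mod 2 + 2 * (x div 2)"
    by simp
  then have "(of_int x :: bit) = of_int (x mod 2) + 2 * of_int (x div 2)"
    by (metis of_int_add of_int_mult of_int_numeral)
  then show ?thesis
    by simp
qed

lemma of_int_bit_eq_iff: "(of_int x :: bit) = of_int y \<longleftrightarrow> x mod 2 = y mod 2"
proof -
  have "x mod 2 \<in> {0, 1}" "y mod 2 \<in> {0, 1}"
    by auto
  then show ?thesis
    by (subst (1 2) of_int_bit_mod) auto
qed

lemma cong2_iff_meq: "cong2 n A B \<longleftrightarrow> meq n (of_int_mat A :: bit sqmat) (of_int_mat B)"
  by (simp add: cong2_def meq_def of_int_mat_def of_int_bit_eq_iff)

lemma of_int_mat_mult: "of_int_mat (mat_mult n A B) = mmult n (of_int_mat A) (of_int_mat B)"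
  by (simp add: of_int_mat_def mat_mult_def mmult_def fun_eq_iff)

lemma of_int_mat_id: "of_int_mat mat_id = mone"
  by (simp add: of_int_mat_def mat_id_def mone_def fun_eq_iff)

lemma of_int_mat_transpose: "of_int_mat (mat_transpose A) = mtransp (of_int_mat A)"
  by (simp add: of_int_mat_def mat_transpose_def mtransp_def fun_eq_iff)

lemma of_int_mat_prod_list: "of_int_mat (mat_prod_list n As) = mprod n (map of_int_mat As)"
  by (induction As) (simp_all add: mat_prod_list_def mprod_def of_int_mat_id of_int_mat_mult)

lemma of_int_mat_permute_rc:
  "of_int_mat (permute_rc \<sigma> \<tau> A) = (\<lambda>i j. of_int_mat A (\<sigma> i) (\<tau> j))"
  by (simp add: of_int_mat_def permute_rc_def)

lemma of_int_mat_transvection: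
  "of_int_mat (mat_add mat_id (outer u)) = transv (\<lambda>i. of_int (u i))"
  by (simp add: of_int_mat_def mat_add_def mat_id_def outer_def transv_def mone_def fun_eq_iff)

lemma D_orthogonal_iff: "D_orthogonal n P \<longleftrightarrow> orthogonal n (of_int_mat P :: bit sqmat)"
  by (simp add: D_orthogonal_def orthogonal_def cong2_iff_meq of_int_mat_mult
      of_int_mat_transpose of_int_mat_id)

theorem theorem3p9:
  fixes n :: nat and P :: imat
  assumes "D_orthogonal n P"
  shows "\<exists>u :: nat \<Rightarrow> ivec. \<exists>\<sigma> \<tau>.
           (\<forall>k<n. (\<forall>i<n. u k i \<in> {0, 1})
                  \<and> D_orthogonal n (mat_add mat_id (outer (u k))))
         \<and> \<sigma> permutes {..<n} \<and> \<tau> permutes {..<n}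
         \<and> cong2 n (permute_rc \<sigma> \<tau> P)
             (mat_prod_list n (map (\<lambda>k. mat_add mat_id (outer (u k))) [0..<n]))"
proof -
  obtain w :: "nat \<Rightarrow> nat \<Rightarrow> bit" and \<sigma> \<tau>
    where W: "\<forall>k<n. dot n (w k) (w k) = 0" "\<sigma> permutes {..<n}" "\<tau> permutes {..<n}"
      "meq n (\<lambda>i j. of_int_mat P (\<sigma> i) (\<tau> j)) (mprod n (map (\<lambda>k. transv (w k)) [0..<n]))"
    using orthogonal_block_factorization[of n n "of_int_mat P :: bit sqmat"] assms
    by (auto simp: D_orthogonal_iff id_outside_def)
  define u :: "nat \<Rightarrow> ivec" where "u = (\<lambda>k i. of_bit (w k i))"
  have "(\<lambda>i. of_int (u k i)) = w k" for k
    unfolding u_def using bit_cases by (auto simp: fun_eq_iff)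
  then have T: "of_int_mat (mat_add mat_id (outer (u k))) = transv (w k)" for k
    by (simp add: of_int_mat_transvection)
  have "u k i \<in> {0, 1}" for k i
    using bit_cases by (simp add: u_def)
  then have "\<forall>k<n. (\<forall>i<n. u k i \<in> {0, 1}) \<and> D_orthogonal n (mat_add mat_id (outer (u k)))"
    using W(1) by (simp add: D_orthogonal_iff T orthogonal_transv)
  moreover have "cong2 n (permute_rc \<sigma> \<tau> P)
      (mat_prod_list n (map (\<lambda>k. mat_add mat_id (outer (u k))) [0..<n]))"
    using W(4) by (simp add: cong2_iff_meq of_int_mat_prod_list of_int_mat_permute_rc T comp_def)
  ultimately show ?thesis
    using W(2,3) by (intro exI[of _ u] exI[of _ \<sigma>] exI[of _ \<tau>] conjI)
qed

end
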